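(* For every approval-based participatory budgeting instance $I=(N,\mathcal{T},B,\mathrm{cost},\mathcal{A})$ and every nonempty $T\subseteq\mathcal{T}$, the proportionality degree of the sequential Phragmén rule satisfies \[ d_{\mathrm{Phrag}}(T)\;\ge\;\frac{1}{2}\left(\frac{\mathrm{cost}(T)}{\max_{t\in T}\mathrm{cost}(t)}-1\right). \]
   Context: An approval-based PB instance is $I=(N,\mathcal{T},B,\mathrm{cost},\mathcal{A})$: $N$ is a set of $n$ voters, $\mathcal{T}$ a finite set of projects, $B>0$ a budget, $\mathrm{cost}:\mathcal{T}\to\mathbb{R}_{>0}$, with $\mathrm{cost}(S)=\sum_{t\in S}\mathrm{cost}(t)$, and $A_i\subseteq\mathcal{T}$ the projects approved by voter $i$. For $T\subseteq\mathcal{T}$, $V\subseteq N$ is $T$-cohesive if $T\subseteq\bigcap_{i\in V}A_i$ and $\mathrm{cost}(T)/B\le|V|/n$; $\mathcal{V}(T)$ is the set of all $T$-cohesive groups. $\mathrm{avg}_W(V)=\frac{1}{|V|}\sum_{i\in V}|W\cap A_i|$. For a rule $f$, $d_f(T)=\sup\{g:\ \min_{V\in\mathcal{V}(T)}\mathrm{avg}_{f(I)}(V)\ge\min(|T|,g)\}$. Sequential Phragmén rule: start with an empty proposal $W$. Every voter earns credits continuously at rate one unit of credit per unit of time. At the first moment when some not-yet-selected project $p$ is such that the voters approving $p$ together hold $\mathrm{cost}(p)$ credits, $p$ is added to $W$ and the balances of all voters approving $p$ are reset to $0$ (other voters keep their credits); ties broken arbitrarily. The rule stops when the project it would select next would make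 the total cost of $W$ exceed $B$, and returns $W$. *)

theory Defs
  imports "HOL-Analysis.Analysis"
begin

definition pb_instance :: "'v set \<Rightarrow> 'p set \<Rightarrow> real \<Rightarrow> ('p \<Rightarrow> real) \<Rightarrow> ('v \<Rightarrow> 'p set) \<Rightarrow> bool" where
  "pb_instance N P B cost A \<longleftrightarrow> finite N \<and> N \<noteq> {} \<and> finite P \<and> B > 0 \<and>
     (\<forall>t\<in>P. cost t > 0) \<and> (\<forall>i\<in>N. A i \<subseteq> P)"

definition total_cost :: "('p \<Rightarrow> real) \<Rightarrow> 'p set \<Rightarrow> real" where
  "total_cost cost S = (\<Sum>t\<in>S. cost t)"

definition approvers :: "'v set \<Rightarrow> ('v \<Rightarrow> 'p set) \<Rightarrow> 'p \<Rightarrow> 'v set" where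
  "approvers N A p = {i\<in>N. p \<in> A i}"

definition cohesive :: "'v set \<Rightarrow> real \<Rightarrow> ('p \<Rightarrow> real) \<Rightarrow> ('v \<Rightarrow> 'p set) \<Rightarrow> 'p set \<Rightarrow> 'v set \<Rightarrow> bool" where
  "cohesive N B cost A T V \<longleftrightarrow> V \<subseteq> N \<and> (\<forall>i\<in>V. T \<subseteq> A i) \<and>
     total_cost cost T / B \<le> real (card V) / real (card N)"

definition avg_sat :: "('v \<Rightarrow> 'p set) \<Rightarrow> 'p set \<Rightarrow> 'v set \<Rightarrow> real" where
  "avg_sat A W V = (\<Sum>i\<in>V. real (card (W \<inter> A i))) / real (card V)"

definition prop_degree :: "'v set \<Rightarrow> real \<Rightarrow> ('p \<Rightarrow> real) \<Rightarrow> ('v \<Rightarrow> 'p set) \<Rightarrow> 'p set \<Rightarrow> 'p set \<Rightarrow> ereal" where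
  "prop_degree N B cost A W T =
     (SUP g\<in>{g::real. \<forall>V. cohesive N B cost A T V \<longrightarrow>
                 avg_sat A W V \<ge> min (real (card T)) g}. ereal g)"

text \<open>A state (W, b, t): selected projects W, voter balances b at time t.
  Project p (unselected, with at least one approver) becomes affordable at time
  phrag_time: the first t' \<ge> t with \<Sum> approvers (b i + (t' - t)) \<ge> cost p.\<close>
definition phrag_time :: "'v set \<Rightarrow> ('p \<Rightarrow> real) \<Rightarrow> ('v \<Rightarrow> 'p set) \<Rightarrow> ('v \<Rightarrow> real) \<Rightarrow> real \<Rightarrow> 'p \<Rightarrow> real" where
  "phrag_time N cost A b t p =
     t + max 0 ((cost p - (\<Sum>i\<in>approvers N A p. b i)) / real (card (approvers N A p)))"

definition phrag_candidate :: "'v set \<Rightarrow> 'p set \<Rightarrow> ('v \<Rightarrow> 'p set) \<Rightarrow> 'p set \<Rightarrow> 'p \<Rightarrow> bool" where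
  "phrag_candidate N P A W p \<longleftrightarrow> p \<in> P \<and> p \<notin> W \<and> approvers N A p \<noteq> {}"

definition phrag_next :: "'v set \<Rightarrow> 'p set \<Rightarrow> ('p \<Rightarrow> real) \<Rightarrow> ('v \<Rightarrow> 'p set) \<Rightarrow> 'p set \<Rightarrow> ('v \<Rightarrow> real) \<Rightarrow> real \<Rightarrow> 'p \<Rightarrow> bool" where
  "phrag_next N P cost A W b t p \<longleftrightarrow> phrag_candidate N P A W p \<and>
     (\<forall>q. phrag_candidate N P A W q \<longrightarrow> phrag_time N cost A b t p \<le> phrag_time N cost A b t q)"

inductive phrag_reach :: "'v set \<Rightarrow> 'p set \<Rightarrow> real \<Rightarrow> ('p \<Rightarrow> real) \<Rightarrow> ('v \<Rightarrow> 'p set) \<Rightarrow>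
    'p set \<Rightarrow> ('v \<Rightarrow> real) \<Rightarrow> real \<Rightarrow> bool"
  for N P B cost A where
  init: "phrag_reach N P B cost A {} (\<lambda>_. 0) 0"
| step: "phrag_reach N P B cost A W b t \<Longrightarrow> phrag_next N P cost A W b t p \<Longrightarrow>
         total_cost cost (insert p W) \<le> B \<Longrightarrow>
         t' = phrag_time N cost A b t p \<Longrightarrow>
         phrag_reach N P B cost A (insert p W)
           (\<lambda>i. if p \<in> A i then 0 else b i + (t' - t)) t'"

text \<open>W is a possible output of sequential Phragmen (for some tie-breaking): a reachable state
  at which the next selected project would exceed the budget, or no project can ever be selected.\<close>
definition phragmen_outcome :: "'v set \<Rightarrow> 'p set \<Rightarrow> real \<Rightarrow> ('p \<Rightarrow> real) \<Rightarrow> ('v \<Rightarrow> 'p set) \<Rightarrow> 'p set \<Rightarrow> bool" where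
  "phragmen_outcome N P B cost A W \<longleftrightarrow> (\<exists>b t. phrag_reach N P B cost A W b t \<and>
     ((\<exists>p. phrag_next N P cost A W b t p \<and> total_cost cost (insert p W) > B) \<or>
      (\<forall>q. \<not> phrag_candidate N P A W q)))"

end

theory Submission
  imports Defs
begin

(* Fix a T-cohesive group V of v voters and a project q \<in> T that Phragmen has not selected,
   of cost c.  As long as q is unselected, the voters of V hold at most c credits together, so
   the potential \<Sum>i\<in>V. (t - b i)^2 / s i + (b i)^2, with s i the number of selected projects
   approved by i, grows at rate at most 2 v min(t, c / v); selecting a project never increases
   it (Cauchy-Schwarz).  When the rule stops at time \<tau>, the n voters have earned more than B,
   so cohesiveness gives v \<tau> > cost T \<ge> c.  A tangent-line lower bound on the potential
   then forces \<Sum>i\<in>V. s i \<ge> v (v \<tau> - c) / (2 c), i.e. an average satisfaction of at least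
   (v \<tau> / c - 1) / 2 \<ge> (cost T / max cost - 1) / 2. *)

section \<open>The potential bound\<close>

(* The antiderivative of 2 v min(t, c / v) vanishing at 0: the fastest the potential of v voters
   can grow while together they hold at most c credits. *)
definition potential_cap :: "real \<Rightarrow> real \<Rightarrow> real \<Rightarrow> real" where
  "potential_cap v c t = v * t\<^sup>2 - v * (max 0 (t - c / v))\<^sup>2"

lemma potential_cap_zero: "0 < v \<Longrightarrow> 0 < c \<Longrightarrow> potential_cap v c 0 = 0"
  by (simp add: potential_cap_def)

lemma potential_cap_eq: "0 < v \<Longrightarrow> c / v \<le> t \<Longrightarrow> potential_cap v c t = 2 * c * t - c\<^sup>2 / v"
  by (simp add: potential_cap_def max_def power2_eq_square field_simps)

lemma potential_cap_increment:
  assumes v: "0 < v" and d: "0 \<le> d" and F: "0 \<le> F" "F \<le> v * t" "F + v * d \<le> c"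
  shows "2 * d * F + v * d\<^sup>2 \<le> potential_cap v c (t + d) - potential_cap v c t"
proof -
  define a where "a = c / v"
  define f where "f = F / v"
  have "f \<le> t" "f + d \<le> a"
    using F v by (simp_all add: a_def f_def pos_divide_le_eq pos_le_divide_eq algebra_simps)
  have "2 * d * f + d\<^sup>2 \<le> ((t + d)\<^sup>2 - (max 0 (t + d - a))\<^sup>2) - (t\<^sup>2 - (max 0 (t - a))\<^sup>2)"
  proof (cases "t + d \<le> a")
    case True
    with d \<open>f \<le> t\<close> show ?thesis by (simp add: max_def power2_eq_square algebra_simps mult_left_mono)
  next
    case False
    have fa: "d * (f + d) \<le> d * a" using \<open>f + d \<le> a\<close> d by (simp add: mult_left_mono)
    show ?thesis
    proof (cases "a \<le> t")
      case True
      with d have "((t + d)\<^sup>2 - (max 0 (t + d - a))\<^sup>2) - (t\<^sup>2 - (max 0 (t - a))\<^sup>2) = 2 * d * a"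
        by (simp add: power2_eq_square algebra_simps)
      moreover have "2 * d * f + d\<^sup>2 \<le> 2 * d * a"
        using fa mult_nonneg_nonneg[OF d d] unfolding power2_eq_square mult.assoc distrib_left
        by linarith
      ultimately show ?thesis by simp
    next
      case False
      have "(t + d - a) * (t + d - a) \<le> 2 * d * (t + d - a)"
        using \<open>\<not> t + d \<le> a\<close> False by (intro mult_right_mono) auto
      with fa \<open>\<not> t + d \<le> a\<close> False show ?thesis
        by (simp add: max_def power2_eq_square algebra_simps)
    qed
  qed
  then have "v * (2 * d * f + d\<^sup>2)
      \<le> v * (((t + d)\<^sup>2 - (max 0 (t + d - a))\<^sup>2) - (t\<^sup>2 - (max 0 (t - a))\<^sup>2))"
    using v by simp
  then show ?thesis
    using v by (simp add: potential_cap_def a_def f_def algebra_simps)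
qed

lemma sq_add_div_Suc_le:
  fixes s u w :: real
  assumes "0 < s"
  shows "(u + w)\<^sup>2 / (s + 1) \<le> u\<^sup>2 / s + w\<^sup>2"
proof -
  have "(u + w)\<^sup>2 * s \<le> (u\<^sup>2 + s * w\<^sup>2) * (s + 1)"
    using zero_le_power2[of "u - s * w"] by (simp add: power2_eq_square algebra_simps)
  then show ?thesis
    using assms by (simp add: field_simps)
qed

lemma tangent_le_sq_div:
  fixes s u l :: real
  assumes "0 \<le> s" "s = 0 \<Longrightarrow> u = 0"
  shows "2 * l * u - l\<^sup>2 * s \<le> u\<^sup>2 / s"
proof (cases "s = 0")
  case False
  with assms have "0 < s" by simp
  have "u\<^sup>2 / s - (2 * l * u - l\<^sup>2 * s) = (u - l * s)\<^sup>2 / s"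
    using \<open>0 < s\<close> by (simp add: field_simps power2_eq_square)
  also have "\<dots> \<ge> 0" using \<open>0 < s\<close> by simp
  finally show ?thesis by simp
qed (use assms in simp)

lemma sum_ge_of_potential_le:
  fixes s x :: "'a \<Rightarrow> real" and c \<tau> :: real
  assumes V: "finite V" "V \<noteq> {}" and c: "0 < c"
    and s: "\<And>i. i \<in> V \<Longrightarrow> 0 \<le> s i" "\<And>i. i \<in> V \<Longrightarrow> s i = 0 \<Longrightarrow> x i = \<tau>"
    and x: "(\<Sum>i\<in>V. x i) \<le> c"
    and potential: "(\<Sum>i\<in>V. (\<tau> - x i)\<^sup>2 / s i + (x i)\<^sup>2) \<le> 2 * c * \<tau> - c\<^sup>2 / card V"
  shows "card V * (card V * \<tau> - c) / (2 * c) \<le> (\<Sum>i\<in>V. s i)"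
proof -
  define v where "v = real (card V)"
  define m where "m = c / v"
  have v: "0 < v" using V by (simp add: v_def card_gt_0_iff)
  then have vm: "v * m = c" by (simp add: m_def)
  \<comment> \<open>Lagrangian relaxation, with multiplier 2 m for the s i and m for the x i\<close>
  have per_voter: "2 * (2 * m) * (\<tau> - x i) - (2 * m)\<^sup>2 * s i + (2 * m * x i - m\<^sup>2)
      \<le> (\<tau> - x i)\<^sup>2 / s i + (x i)\<^sup>2" if "i \<in> V" for i
  proof -
    have "2 * (2 * m) * (\<tau> - x i) - (2 * m)\<^sup>2 * s i \<le> (\<tau> - x i)\<^sup>2 / s i"
      using s that by (intro tangent_le_sq_div) auto
    moreover have "2 * m * x i - m\<^sup>2 \<le> (x i)\<^sup>2"
      using zero_le_power2[of "x i - m"] by (simp add: power2_eq_square algebra_simps)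
    ultimately show ?thesis by linarith
  qed
  have "4 * m * (v * \<tau>) - 2 * m * (\<Sum>i\<in>V. x i) - 4 * m\<^sup>2 * (\<Sum>i\<in>V. s i) - v * m\<^sup>2
      = (\<Sum>i\<in>V. 2 * (2 * m) * (\<tau> - x i) - (2 * m)\<^sup>2 * s i + (2 * m * x i - m\<^sup>2))"
    by (simp add: sum.distrib sum_subtractf sum_distrib_right v_def power2_eq_square algebra_simps
        flip: sum_distrib_left)
  also have "\<dots> \<le> (\<Sum>i\<in>V. (\<tau> - x i)\<^sup>2 / s i + (x i)\<^sup>2)"
    by (rule sum_mono) (rule per_voter)
  also have "\<dots> \<le> 2 * c * \<tau> - c * m"
    using potential by (simp add: m_def v_def power2_eq_square)
  finally have "4 * m * (v * \<tau>) - 2 * m * (\<Sum>i\<in>V. x i) - 4 * m\<^sup>2 * (\<Sum>i\<in>V. s i) - v * m\<^sup>2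
      \<le> 2 * c * \<tau> - c * m" .
  moreover have "4 * m * (v * \<tau>) = 4 * c * \<tau>" "v * m\<^sup>2 = c * m"
    using vm by (simp_all add: power2_eq_square flip: vm)
  ultimately have "2 * c * \<tau> - 2 * m * (\<Sum>i\<in>V. x i) \<le> 4 * m\<^sup>2 * (\<Sum>i\<in>V. s i)"
    by linarith
  moreover have "2 * m * (\<Sum>i\<in>V. x i) \<le> 2 * m * c"
    using x v c by (intro mult_left_mono) (simp_all add: m_def)
  ultimately have "2 * c * (\<tau> - m) \<le> 4 * m\<^sup>2 * (\<Sum>i\<in>V. s i)"
    by (simp add: algebra_simps)
  moreover have "0 < m" using v c by (simp add: m_def)
  moreover have "card V * (card V * \<tau> - c) / (2 * c) = 2 * c * (\<tau> - m) / (4 * m\<^sup>2)"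
    using v c by (simp add: m_def v_def power2_eq_square field_simps)
  ultimately show ?thesis
    by (simp add: pos_divide_le_eq mult.commute)
qed

(* t - b i is what voter i has spent so far, on the card (W \<inter> A i) selected projects it approves.
   If there are none, division by 0 gives 0, which is harmless since then b i = t. *)
definition voter_potential :: "('v \<Rightarrow> 'p set) \<Rightarrow> 'p set \<Rightarrow> ('v \<Rightarrow> real) \<Rightarrow> real \<Rightarrow> 'v \<Rightarrow> real" where
  "voter_potential A W b t i = (t - b i)\<^sup>2 / card (W \<inter> A i) + (b i)\<^sup>2"

lemma voter_potential_advance:
  "voter_potential A W (\<lambda>j. b j + d) (t + d) i = voter_potential A W b t i + 2 * d * b i + d\<^sup>2"
  by (simp add: voter_potential_def power2_eq_square algebra_simps)

lemma voter_potential_select: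
  assumes "finite W" "p \<notin> W" "W \<inter> A i = {} \<Longrightarrow> b i = t"
  shows "voter_potential A (insert p W) (\<lambda>j. if p \<in> A j then 0 else b j) t i
    \<le> voter_potential A W b t i"
proof (cases "p \<in> A i")
  case True
  define s where "s = real (card (W \<inter> A i))"
  have "card (insert p W \<inter> A i) = card (W \<inter> A i) + 1"
    using True assms(1,2) by simp
  then have "voter_potential A (insert p W) (\<lambda>j. if p \<in> A j then 0 else b j) t i
      = ((t - b i) + b i)\<^sup>2 / (s + 1)"
    using True by (simp add: voter_potential_def s_def)
  also have "\<dots> \<le> (t - b i)\<^sup>2 / s + (b i)\<^sup>2"
  proof (cases "s = 0")
    case True
    then show ?thesis
      using assms(1,3) by (simp add: s_def)
  next
    case False
    then show ?thesis
      by (intro sq_add_div_Suc_le) (simp add: s_def)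
  qed
  finally show ?thesis
    by (simp add: voter_potential_def s_def)
qed (simp add: voter_potential_def)

lemma potential_advance:
  fixes b :: "'v \<Rightarrow> real"
  assumes V: "finite V" "V \<noteq> {}" and d: "0 \<le> d"
    and b: "\<And>i. i \<in> V \<Longrightarrow> 0 \<le> b i" "\<And>i. i \<in> V \<Longrightarrow> b i \<le> t"
    and budget: "(\<Sum>i\<in>V. b i + d) \<le> c"
    and potential: "(\<Sum>i\<in>V. voter_potential A W b t i) \<le> potential_cap (card V) c t"
  shows "(\<Sum>i\<in>V. voter_potential A W (\<lambda>j. b j + d) (t + d) i) \<le> potential_cap (card V) c (t + d)"
proof -
  have "2 * d * (\<Sum>i\<in>V. b i) + card V * d\<^sup>2
      \<le> potential_cap (card V) c (t + d) - potential_cap (card V) c t"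
  proof (rule potential_cap_increment)
    show "0 < real (card V)" using V by (simp add: card_gt_0_iff)
    show "0 \<le> (\<Sum>i\<in>V. b i)" using b by (simp add: sum_nonneg)
    show "(\<Sum>i\<in>V. b i) \<le> card V * t" using b sum_mono[of V b "\<lambda>_. t"] by simp
    show "(\<Sum>i\<in>V. b i) + card V * d \<le> c" using budget by (simp add: sum.distrib)
  qed (rule d)
  moreover have "(\<Sum>i\<in>V. voter_potential A W (\<lambda>j. b j + d) (t + d) i)
      = (\<Sum>i\<in>V. voter_potential A W b t i) + 2 * d * (\<Sum>i\<in>V. b i) + card V * d\<^sup>2"
    by (simp add: voter_potential_advance sum.distrib sum_distrib_left)
  ultimately show ?thesis
    using potential by linarith
qed

lemma avg_sat_ge_of_potential_le:
  fixes x :: "'v \<Rightarrow> real" and c \<tau> :: real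
  assumes W: "finite W" and V: "finite V" "V \<noteq> {}" and c: "0 < c" and \<tau>: "c / card V \<le> \<tau>"
    and unselected: "\<And>i. i \<in> V \<Longrightarrow> W \<inter> A i = {} \<Longrightarrow> x i = \<tau>"
    and x: "(\<Sum>i\<in>V. x i) \<le> c"
    and potential: "(\<Sum>i\<in>V. voter_potential A W x \<tau> i) \<le> potential_cap (card V) c \<tau>"
  shows "(card V * \<tau> - c) / (2 * c) \<le> avg_sat A W V"
proof -
  have v: "0 < real (card V)"
    using V by (simp add: card_gt_0_iff)
  have "(\<Sum>i\<in>V. (\<tau> - x i)\<^sup>2 / card (W \<inter> A i) + (x i)\<^sup>2) \<le> 2 * c * \<tau> - c\<^sup>2 / card V"
    using potential potential_cap_eq[OF v \<tau>] by (simp add: voter_potential_def)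
  from sum_ge_of_potential_le[OF V c _ _ x this]
  have "card V * (card V * \<tau> - c) / (2 * c) \<le> (\<Sum>i\<in>V. real (card (W \<inter> A i)))"
    using W unselected by auto
  then show ?thesis
    using v by (simp add: avg_sat_def pos_le_divide_eq field_simps)
qed

section \<open>Invariants of sequential Phragmen\<close>

lemma phrag_time_ge: "t \<le> phrag_time N cost A b t q"
  by (simp add: phrag_time_def)

lemma phrag_time_eq:
  assumes "finite N" "approvers N A q \<noteq> {}" "(\<Sum>i\<in>approvers N A q. b i) \<le> cost q"
  shows "phrag_time N cost A b t q
    = t + (cost q - (\<Sum>i\<in>approvers N A q. b i)) / card (approvers N A q)"
  using assms by (simp add: phrag_time_def approvers_def)

lemma affordable_iff_le_phrag_time:
  assumes "finite N" "approvers N A q \<noteq> {}" "(\<Sum>i\<in>approvers N A q. b i) \<le> cost q"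
  shows "(\<Sum>i\<in>approvers N A q. b i + e) \<le> cost q \<longleftrightarrow> t + e \<le> phrag_time N cost A b t q"
proof -
  have "0 < card (approvers N A q)"
    using assms by (simp add: card_gt_0_iff approvers_def)
  then show ?thesis
    using assms by (simp add: phrag_time_eq sum.distrib pos_le_divide_eq algebra_simps)
qed

lemma sum_at_phrag_time:
  assumes "finite N" "approvers N A q \<noteq> {}" "(\<Sum>i\<in>approvers N A q. b i) \<le> cost q"
  shows "(\<Sum>i\<in>approvers N A q. b i + (phrag_time N cost A b t q - t)) = cost q"
proof -
  have "0 < card (approvers N A q)"
    using assms by (simp add: card_gt_0_iff approvers_def)
  then show ?thesis
    using assms by (simp add: phrag_time_eq sum.distrib)
qed

lemma phrag_next_affordable:
  assumes "finite N" "phrag_next N P cost A W b t p" "phrag_candidate N P A W q"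
    and "(\<Sum>i\<in>approvers N A q. b i) \<le> cost q"
  shows "(\<Sum>i\<in>approvers N A q. b i + (phrag_time N cost A b t p - t)) \<le> cost q"
proof -
  have "phrag_time N cost A b t p \<le> phrag_time N cost A b t q"
    using assms(2,3) by (simp add: phrag_next_def)
  moreover have "approvers N A q \<noteq> {}"
    using assms(3) by (simp add: phrag_candidate_def)
  ultimately show ?thesis
    using assms(1,4) by (subst affordable_iff_le_phrag_time[where t = t]) auto
qed

lemma pb_finite_voters: "pb_instance N P B cost A \<Longrightarrow> finite N"
  by (simp add: pb_instance_def)

lemma phrag_reach_subset: "phrag_reach N P B cost A W b t \<Longrightarrow> W \<subseteq> P"
  by (induction rule: phrag_reach.induct) (auto simp: phrag_next_def phrag_candidate_def)

lemma phrag_reach_finite: "pb_instance N P B cost A \<Longrightarrow> phrag_reach N P B cost A W b t \<Longrightarrow> finite W"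
  by (meson finite_subset pb_instance_def phrag_reach_subset)

lemma phrag_reach_time_nonneg: "phrag_reach N P B cost A W b t \<Longrightarrow> 0 \<le> t"
  by (induction rule: phrag_reach.induct) (auto intro: order_trans[OF _ phrag_time_ge])

lemma phrag_reach_balance_nonneg: "phrag_reach N P B cost A W b t \<Longrightarrow> 0 \<le> b i"
  by (induction rule: phrag_reach.induct) (auto simp: phrag_time_def)

lemma phrag_reach_balance_le_time: "phrag_reach N P B cost A W b t \<Longrightarrow> b i \<le> t"
proof (induction rule: phrag_reach.induct)
  case (step W b t p t')
  then show ?case
    using phrag_reach_time_nonneg[OF step.hyps(1)] phrag_time_ge[of t N cost A b p] by auto
qed simp

lemma phrag_reach_unselected_balance:
  "phrag_reach N P B cost A W b t \<Longrightarrow> W \<inter> A i = {} \<Longrightarrow> b i = t"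
  by (induction rule: phrag_reach.induct) auto

lemma phrag_reach_affordable:
  assumes pb: "pb_instance N P B cost A"
    and "phrag_reach N P B cost A W b t" "phrag_candidate N P A W q"
  shows "(\<Sum>i\<in>approvers N A q. b i) \<le> cost q"
  using assms(2,3)
proof (induction arbitrary: q rule: phrag_reach.induct)
  case init
  then show ?case
    using pb by (auto simp: pb_instance_def phrag_candidate_def less_imp_le)
next
  case (step W b t p t')
  have "phrag_candidate N P A W q"
    using step.prems by (auto simp: phrag_candidate_def)
  have "(\<Sum>i\<in>approvers N A q. if p \<in> A i then 0 else b i + (t' - t))
      \<le> (\<Sum>i\<in>approvers N A q. b i + (t' - t))"
    using phrag_reach_balance_nonneg[OF step.hyps(1)] phrag_time_ge[of t N cost A b p] step.hyps(4)
    by (intro sum_mono) auto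
  also have "\<dots> \<le> cost q"
    using phrag_next_affordable[OF pb_finite_voters[OF pb] step.hyps(2) \<open>phrag_candidate N P A W q\<close>
        step.IH[OF \<open>phrag_candidate N P A W q\<close>]] step.hyps(4) by simp
  finally show ?case .
qed

lemma phrag_next_total_cost_insert:
  assumes "pb_instance N P B cost A"
    and "phrag_reach N P B cost A W b t" "phrag_next N P cost A W b t p"
  shows "total_cost cost (insert p W) = cost p + total_cost cost W"
  using assms phrag_reach_finite
  by (fastforce simp: total_cost_def phrag_next_def phrag_candidate_def)

lemma phrag_next_pays:
  assumes pb: "pb_instance N P B cost A"
    and reach: "phrag_reach N P B cost A W b t" and next_p: "phrag_next N P cost A W b t p"
  shows "(\<Sum>i\<in>approvers N A p. b i + (phrag_time N cost A b t p - t)) = cost p"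
proof -
  have "phrag_candidate N P A W p"
    using next_p by (simp add: phrag_next_def)
  then show ?thesis
    using pb_finite_voters[OF pb] phrag_reach_affordable[OF pb reach]
    by (intro sum_at_phrag_time) (auto simp: phrag_candidate_def)
qed

lemma phrag_reach_balance_sum:
  assumes pb: "pb_instance N P B cost A" and "phrag_reach N P B cost A W b t"
  shows "(\<Sum>i\<in>N. b i) = real (card N) * t - total_cost cost W"
  using assms(2)
proof (induction rule: phrag_reach.induct)
  case init
  then show ?case by (simp add: total_cost_def)
next
  case (step W b t p t')
  define Q where "Q = approvers N A p"
  have N: "finite N" "Q \<subseteq> N"
    using pb by (auto simp: pb_instance_def Q_def approvers_def)
  have "N - Q = {i\<in>N. p \<notin> A i}"
    by (auto simp: Q_def approvers_def)
  then have "(\<Sum>i\<in>N. if p \<in> A i then 0 else b i + (t' - t)) = (\<Sum>i\<in>N - Q. b i + (t' - t))"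
    by (simp add: sum.inter_filter[OF N(1)]) (intro sum.cong; simp)
  also have "\<dots> = (\<Sum>i\<in>N. b i + (t' - t)) - cost p"
    using phrag_next_pays[OF pb step.hyps(1,2)] N step.hyps(4) by (simp add: sum_diff Q_def)
  also have "\<dots> = real (card N) * t' - total_cost cost (insert p W)"
    unfolding sum.distrib using step.IH phrag_next_total_cost_insert[OF pb step.hyps(1,2)]
    by (simp add: algebra_simps)
  finally show ?case .
qed

lemma phrag_next_group_balance_le:
  assumes pb: "pb_instance N P B cost A"
    and reach: "phrag_reach N P B cost A W b t" and next_p: "phrag_next N P cost A W b t p"
    and q: "phrag_candidate N P A W q" and V: "V \<subseteq> approvers N A q"
  shows "(\<Sum>i\<in>V. b i + (phrag_time N cost A b t p - t)) \<le> cost q"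
proof -
  have "finite (approvers N A q)"
    using pb by (simp add: pb_instance_def approvers_def)
  then have "(\<Sum>i\<in>V. b i + (phrag_time N cost A b t p - t))
      \<le> (\<Sum>i\<in>approvers N A q. b i + (phrag_time N cost A b t p - t))"
    using V phrag_reach_balance_nonneg[OF reach] phrag_time_ge[of t N cost A b p]
    by (intro sum_mono2) auto
  also have "\<dots> \<le> cost q"
    using phrag_next_affordable[OF pb_finite_voters[OF pb] next_p q]
      phrag_reach_affordable[OF pb reach q] .
  finally show ?thesis .
qed

lemma phrag_next_total_cost_le:
  assumes pb: "pb_instance N P B cost A"
    and reach: "phrag_reach N P B cost A W b t" and next_p: "phrag_next N P cost A W b t p"
  shows "total_cost cost (insert p W) \<le> real (card N) * phrag_time N cost A b t p"
proof -
  define d where "d = phrag_time N cost A b t p - t"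
  have N: "finite N" "approvers N A p \<subseteq> N"
    using pb by (auto simp: pb_instance_def approvers_def)
  have "cost p \<le> (\<Sum>i\<in>N. b i + d)"
    unfolding phrag_next_pays[OF pb reach next_p, symmetric] d_def
    using N phrag_reach_balance_nonneg[OF reach] phrag_time_ge[of t N cost A b p]
    by (intro sum_mono2) auto
  also have "\<dots> = real (card N) * phrag_time N cost A b t p - total_cost cost W"
    unfolding sum.distrib using phrag_reach_balance_sum[OF pb reach]
    by (simp add: d_def algebra_simps)
  finally show ?thesis
    using phrag_next_total_cost_insert[OF pb reach next_p] by simp
qed

lemma phrag_next_potential:
  assumes pb: "pb_instance N P B cost A"
    and reach: "phrag_reach N P B cost A W b t" and next_p: "phrag_next N P cost A W b t p"
    and V: "V \<subseteq> N" "V \<noteq> {}" "\<forall>i\<in>V. q \<in> A i" and q: "q \<in> P" "q \<notin> W"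
    and potential: "(\<Sum>i\<in>V. voter_potential A W b t i) \<le> potential_cap (card V) (cost q) t"
  defines "t' \<equiv> phrag_time N cost A b t p"
  shows "(\<Sum>i\<in>V. voter_potential A W (\<lambda>j. b j + (t' - t)) t' i) \<le> potential_cap (card V) (cost q) t'"
proof -
  have "finite V"
    using V pb finite_subset by (auto simp: pb_instance_def)
  have "V \<subseteq> approvers N A q"
    using V by (auto simp: approvers_def)
  then have "phrag_candidate N P A W q"
    using V q by (auto simp: phrag_candidate_def)
  have "(\<Sum>i\<in>V. voter_potential A W (\<lambda>j. b j + (t' - t)) (t + (t' - t)) i)
      \<le> potential_cap (card V) (cost q) (t + (t' - t))"
    using \<open>finite V\<close> V(2) phrag_time_ge[of t N cost A b p]
      phrag_reach_balance_nonneg[OF reach] phrag_reach_balance_le_time[OF reach]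
      phrag_next_group_balance_le[OF pb reach next_p \<open>phrag_candidate N P A W q\<close>
        \<open>V \<subseteq> approvers N A q\<close>]
      potential
    by (intro potential_advance) (auto simp: t'_def)
  then show ?thesis
    by simp
qed

lemma phrag_reach_potential:
  assumes pb: "pb_instance N P B cost A" and reach: "phrag_reach N P B cost A W b t"
    and V: "V \<subseteq> N" "V \<noteq> {}" "\<forall>i\<in>V. q \<in> A i" and q: "q \<in> P" "q \<notin> W"
  shows "(\<Sum>i\<in>V. voter_potential A W b t i) \<le> potential_cap (card V) (cost q) t"
  using reach q(2)
proof (induction rule: phrag_reach.induct)
  case init
  have "0 < real (card V)"
    using V pb finite_subset by (auto simp: pb_instance_def card_gt_0_iff)
  moreover have "0 < cost q"
    using pb q by (simp add: pb_instance_def)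
  ultimately show ?case
    by (simp add: voter_potential_def potential_cap_zero)
next
  case (step W b t p t')
  have "p \<notin> W" "q \<notin> W"
    using step.hyps(2) step.prems by (auto simp: phrag_next_def phrag_candidate_def)
  have "(\<Sum>i\<in>V. voter_potential A (insert p W) (\<lambda>i. if p \<in> A i then 0 else b i + (t' - t)) t' i)
      \<le> (\<Sum>i\<in>V. voter_potential A W (\<lambda>j. b j + (t' - t)) t' i)"
    using phrag_reach_finite[OF pb step.hyps(1)] \<open>p \<notin> W\<close>
      phrag_reach_unselected_balance[OF step.hyps(1)]
    by (intro sum_mono voter_potential_select) auto
  also have "\<dots> \<le> potential_cap (card V) (cost q) t'"
    using phrag_next_potential[OF pb step.hyps(1,2) V q(1) \<open>q \<notin> W\<close> step.IH[OF \<open>q \<notin> W\<close>]] step.hyps(4)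
    by simp
  finally show ?case .
qed

lemma phrag_next_potential_le:
  assumes pb: "pb_instance N P B cost A"
    and reach: "phrag_reach N P B cost A W b t" and next_p: "phrag_next N P cost A W b t p"
    and V: "V \<subseteq> N" "V \<noteq> {}" "\<forall>i\<in>V. q \<in> A i" and q: "q \<in> P" "q \<notin> W"
  defines "t' \<equiv> phrag_time N cost A b t p"
  shows "(\<Sum>i\<in>V. voter_potential A W (\<lambda>j. b j + (t' - t)) t' i) \<le> potential_cap (card V) (cost q) t'"
  unfolding t'_def
  using phrag_next_potential[OF assms(1-8) phrag_reach_potential[OF pb reach V q]] .

section \<open>Proportionality degree\<close>

lemma pb_total_cost_pos:
  assumes "pb_instance N P B cost A" "T \<subseteq> P" "T \<noteq> {}"
  shows "0 < total_cost cost T"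
  using assms finite_subset by (auto simp: pb_instance_def total_cost_def intro!: sum_pos)

lemma cohesive_card_pos:
  assumes "cohesive N B cost A T V" "0 < B" "0 < total_cost cost T"
  shows "0 < card V"
proof (rule ccontr)
  assume "\<not> 0 < card V"
  then have "total_cost cost T / B \<le> 0"
    using assms(1) by (simp add: cohesive_def)
  with assms(2,3) show False
    by (simp add: divide_le_0_iff)
qed

lemma cohesive_total_cost_less:
  fixes \<tau> :: real
  assumes coh: "cohesive N B cost A T V" and B: "0 < B" "B < real (card N) * \<tau>"
    and C: "0 < total_cost cost T"
  shows "total_cost cost T < card V * \<tau>"
proof -
  have n: "0 < real (card N)"
    using B by (cases "card N = 0") auto
  have v: "0 < real (card V)"
    using cohesive_card_pos[OF coh B(1) C] by simp
  have "total_cost cost T \<le> card V * (B / card N)"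
    using coh B n by (simp add: cohesive_def divide_le_eq field_simps)
  also have "\<dots> < card V * \<tau>"
    using B n v by (simp add: divide_less_eq mult.commute)
  finally show ?thesis .
qed

lemma avg_sat_ge_card:
  assumes "finite W" "finite V" "V \<noteq> {}" "\<forall>i\<in>V. T \<subseteq> W \<inter> A i"
  shows "card T \<le> avg_sat A W V"
proof -
  have "(\<Sum>i\<in>V. real (card T)) \<le> (\<Sum>i\<in>V. real (card (W \<inter> A i)))"
    using assms(1,4) by (intro sum_mono) (simp add: card_mono)
  then show ?thesis
    using assms(2,3) by (simp add: avg_sat_def card_gt_0_iff pos_le_divide_eq mult.commute)
qed

lemma prop_degree_ge:
  assumes "\<And>V. cohesive N B cost A T V \<Longrightarrow> min (real (card T)) g \<le> avg_sat A W V"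
  shows "ereal g \<le> prop_degree N B cost A W T"
  unfolding prop_degree_def using assms by (intro SUP_upper) auto

lemma phrag_stop_avg_sat_ge:
  assumes pb: "pb_instance N P B cost A"
    and reach: "phrag_reach N P B cost A W b t" and next_p: "phrag_next N P cost A W b t p"
    and over: "B < total_cost cost (insert p W)"
    and coh: "cohesive N B cost A T V" and T: "T \<subseteq> P" and q: "q \<in> T" "q \<notin> W"
  shows "(1/2) * (total_cost cost T / cost q - 1) \<le> avg_sat A W V"
proof -
  define \<tau> where "\<tau> = phrag_time N cost A b t p"
  define v where "v = real (card V)"
  have C: "0 < total_cost cost T"
    using pb_total_cost_pos[OF pb T] q by auto
  have B: "0 < B" and c: "0 < cost q" and "finite T"
    using pb q T finite_subset by (auto simp: pb_instance_def)
  have "0 < card V"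
    using cohesive_card_pos[OF coh B C] .
  then have V: "finite V" "V \<noteq> {}" and v: "0 < v"
    by (auto simp: v_def card_gt_0_iff)
  have VN: "V \<subseteq> N" "\<forall>i\<in>V. q \<in> A i"
    using coh q by (auto simp: cohesive_def)
  then have "V \<subseteq> approvers N A q"
    by (auto simp: approvers_def)
  then have "phrag_candidate N P A W q"
    using V(2) q T by (auto simp: phrag_candidate_def)
  have "total_cost cost T < v * \<tau>"
    using cohesive_total_cost_less[OF coh B _ C] phrag_next_total_cost_le[OF pb reach next_p] over
    by (simp add: v_def \<tau>_def)
  moreover have "cost q \<le> total_cost cost T"
    unfolding total_cost_def
    using \<open>finite T\<close> q T pb by (intro member_le_sum) (auto simp: pb_instance_def less_imp_le)
  ultimately have "cost q / v \<le> \<tau>" "total_cost cost T / cost q < v * \<tau> / cost q"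
    using v c by (simp_all add: pos_divide_le_eq divide_strict_right_mono mult.commute)
  have "(v * \<tau> - cost q) / (2 * cost q) \<le> avg_sat A W V"
    unfolding v_def
  proof (rule avg_sat_ge_of_potential_le[OF phrag_reach_finite[OF pb reach] V c])
    show "cost q / card V \<le> \<tau>"
      using \<open>cost q / v \<le> \<tau>\<close> by (simp add: v_def)
    show "(\<Sum>i\<in>V. b i + (\<tau> - t)) \<le> cost q"
      using phrag_next_group_balance_le[OF pb reach next_p \<open>phrag_candidate N P A W q\<close>
          \<open>V \<subseteq> approvers N A q\<close>]
      by (simp add: \<tau>_def)
    show "(\<Sum>i\<in>V. voter_potential A W (\<lambda>j. b j + (\<tau> - t)) \<tau> i) \<le> potential_cap (card V) (cost q) \<tau>"
      using phrag_next_potential_le[OF pb reach next_p VN(1) V(2) VN(2) _ q(2)] q T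
      by (auto simp: \<tau>_def)
  qed (simp add: phrag_reach_unselected_balance[OF reach])
  have "(1/2) * (total_cost cost T / cost q - 1) \<le> (1/2) * (v * \<tau> / cost q - 1)"
    using \<open>total_cost cost T / cost q < v * \<tau> / cost q\<close> by (intro mult_left_mono) auto
  also have "\<dots> = (v * \<tau> - cost q) / (2 * cost q)"
    using c by (simp add: field_simps)
  finally show ?thesis
    using \<open>(v * \<tau> - cost q) / (2 * cost q) \<le> avg_sat A W V\<close> by (rule order_trans)
qed

lemma phragmen_outcome_avg_sat_ge:
  assumes pb: "pb_instance N P B cost A" and out: "phragmen_outcome N P B cost A W"
    and T: "T \<subseteq> P" "T \<noteq> {}" and coh: "cohesive N B cost A T V"
  shows "min (real (card T)) ((1/2) * (total_cost cost T / (MAX t\<in>T. cost t) - 1)) \<le> avg_sat A W V"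
proof -
  obtain b t where reach: "phrag_reach N P B cost A W b t" and stop:
    "(\<exists>p. phrag_next N P cost A W b t p \<and> total_cost cost (insert p W) > B)
      \<or> (\<forall>q. \<not> phrag_candidate N P A W q)"
    using out by (auto simp: phragmen_outcome_def)
  have "finite T" "0 < B"
    using pb T finite_subset by (auto simp: pb_instance_def)
  have "0 < card V"
    using cohesive_card_pos[OF coh \<open>0 < B\<close> pb_total_cost_pos[OF pb T]] .
  then have V: "finite V" "V \<noteq> {}"
    by (auto simp: card_gt_0_iff)
  show ?thesis
  proof (cases "T \<subseteq> W")
    case True
    then have "card T \<le> avg_sat A W V"
      using coh V phrag_reach_finite[OF pb reach]
      by (intro avg_sat_ge_card) (auto simp: cohesive_def)
    then show ?thesis
      by (rule min.coboundedI1)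
  next
    case False
    then obtain q where q: "q \<in> T" "q \<notin> W"
      by auto
    then have "phrag_candidate N P A W q"
      using coh V T by (force simp: phrag_candidate_def cohesive_def approvers_def)
    then obtain p where next_p: "phrag_next N P cost A W b t p"
      and over: "B < total_cost cost (insert p W)"
      using stop by blast
    have "0 < cost q" "cost q \<le> (MAX t\<in>T. cost t)"
      using pb q T \<open>finite T\<close> by (auto simp: pb_instance_def)
    then have "total_cost cost T / (MAX t\<in>T. cost t) \<le> total_cost cost T / cost q"
      using pb_total_cost_pos[OF pb T] by (intro divide_left_mono) auto
    then have "(1/2) * (total_cost cost T / (MAX t\<in>T. cost t) - 1)
        \<le> (1/2) * (total_cost cost T / cost q - 1)"
      by (intro mult_left_mono) auto
    also have "\<dots> \<le> avg_sat A W V"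
      by (rule phrag_stop_avg_sat_ge[OF pb reach next_p over coh T(1) q])
    finally show ?thesis
      by (rule min.coboundedI2)
  qed
qed

theorem theorem4:
  fixes N :: "'v set" and P :: "'p set" and B :: real and cost :: "'p \<Rightarrow> real"
    and A :: "'v \<Rightarrow> 'p set" and W T :: "'p set"
  assumes "pb_instance N P B cost A"
    and "phragmen_outcome N P B cost A W"
    and "T \<subseteq> P" and "T \<noteq> {}"
  shows "prop_degree N B cost A W T \<ge>
           ereal ((1/2) * (total_cost cost T / (MAX t\<in>T. cost t) - 1))"
  using phragmen_outcome_avg_sat_ge[OF assms] by (intro prop_degree_ge)

end
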